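(* Assume the distribution $\mathcal D_2(\lambda)$ defined in the context. Let $G\in\mathcal G_{d,k}$ be a structure in which at least one of $X_a,X_b$ has children other than $X_a,X_b$. Then $\mathcal S(G)<\mathcal S^*-\beta+3d\lambda$.
   Context: Entropies use the natural logarithm; $k$ is a fixed positive integer. For a set of variables, a family is $\langle Y,\Pi\rangle$ with $\Pi$ not containing $Y$ and $|\Pi|\le k$, with $H(\langle Y,\Pi\rangle)=H(Y\mid\Pi)$; DAGs are identified with their sets of families and have score $\mathcal S(G)=-\sum_{f\in G}H(f)$. Markov-equivalent DAGs form equivalence classes (ECs) with a common score. Construction. $\mathcal D_1$ is a distribution over a finite set $\mathbf X_1$ of at least $k$ discrete variables, containing a variable $X_a$, such that for some $\alpha,\beta>0$: (I) among DAGs over $\mathbf X_1$ with in-degree $\le k$ there is a unique optimal EC, with score gap at least $\beta$ to the next-best EC; (II) $X_a$ has no children in any structure of the optimal EC; (III) $H(X_a\mid\mathbf X_1\setminus\{X_a\})=\alpha$. Let $\mathbf X=\mathbf X_1\cup\{X_b\}$, $d=|\mathbf X|$. For $\lambda\in(0,\min(\alpha,\beta/(3d)))$, $\mathcal D_2(\lambda)$ is a distribution on $\mathbf X$ with marginal $\mathcal D_1$ on $\mathbf X_1$ such that: (IV) there is a hidden Bernoulli variable $C$ independent of $\mathbf X_1$ with $P[X_b=X_a\mid C=1]=1$ and $X_b$ independent of $\mathbf X_1$ given $C=0$; (V) $\max(H(X_b\mid X_a),H(X_a\mid X_b))=\lambda$. $\mathcal G_{d,k}$ is the set of DAGs over $\mathbf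 X$ with in-degree at most $k$, scores are computed under $\mathcal D_2(\lambda)$, and $\mathcal S^*=\max_{G\in\mathcal G_{d,k}}\mathcal S(G)$. *)

theory Defs
  imports "HOL-Probability.Probability"
begin

text \<open>A joint distribution is a pmf over assignments 'i \<Rightarrow> 'v (only the coordinates in the
 relevant variable set matter).\<close>

definition marg :: "'i set \<Rightarrow> ('i \<Rightarrow> 'v) pmf \<Rightarrow> ('i \<Rightarrow> 'v) pmf" where
  "marg S p = map_pmf (\<lambda>a. restrict a S) p"

definition ent :: "('i \<Rightarrow> 'v) pmf \<Rightarrow> 'i set \<Rightarrow> real" where
  "ent p S = (\<Sum>x\<in>set_pmf (marg S p). - pmf (marg S p) x * ln (pmf (marg S p) x))"

definition condH :: "('i \<Rightarrow> 'v) pmf \<Rightarrow> 'i \<Rightarrow> 'i set \<Rightarrow> real" where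
  "condH p Y Par = ent p (insert Y Par) - ent p Par"

text \<open>A DAG over V is given by its parent function (equivalently its set of families
 \<langle>v, pa v\<rangle>, v \<in> V); in-degree at most k.\<close>
definition edges :: "('i \<Rightarrow> 'i set) \<Rightarrow> ('i \<times> 'i) set" where
  "edges pa = {(u, v). u \<in> pa v}"

definition dag_k :: "'i set \<Rightarrow> nat \<Rightarrow> ('i \<Rightarrow> 'i set) \<Rightarrow> bool" where
  "dag_k V k pa \<longleftrightarrow>
     (\<forall>v\<in>V. pa v \<subseteq> V - {v} \<and> card (pa v) \<le> k) \<and>
     (\<forall>v. v \<notin> V \<longrightarrow> pa v = {}) \<and> acyclic (edges pa)"

definition score :: "('i \<Rightarrow> 'v) pmf \<Rightarrow> 'i set \<Rightarrow> ('i \<Rightarrow> 'i set) \<Rightarrow> real" where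
  "score p V pa = - (\<Sum>v\<in>V. condH p v (pa v))"

definition opt_score :: "('i \<Rightarrow> 'v) pmf \<Rightarrow> 'i set \<Rightarrow> nat \<Rightarrow> real" where
  "opt_score p V k = Max (score p V ` {G. dag_k V k G})"

definition optimal :: "('i \<Rightarrow> 'v) pmf \<Rightarrow> 'i set \<Rightarrow> nat \<Rightarrow> ('i \<Rightarrow> 'i set) \<Rightarrow> bool" where
  "optimal p V k G \<longleftrightarrow> dag_k V k G \<and> score p V G = opt_score p V k"

definition adj :: "('i \<Rightarrow> 'i set) \<Rightarrow> 'i \<Rightarrow> 'i \<Rightarrow> bool" where
  "adj pa u v \<longleftrightarrow> u \<in> pa v \<or> v \<in> pa u"

definition is_path :: "('i \<Rightarrow> 'i set) \<Rightarrow> 'i list \<Rightarrow> bool" where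
  "is_path pa xs \<longleftrightarrow> length xs \<ge> 2 \<and> distinct xs \<and>
     (\<forall>i. Suc i < length xs \<longrightarrow> adj pa (xs ! i) (xs ! Suc i))"

definition collider :: "('i \<Rightarrow> 'i set) \<Rightarrow> 'i list \<Rightarrow> nat \<Rightarrow> bool" where
  "collider pa xs i \<longleftrightarrow> xs ! (i - 1) \<in> pa (xs ! i) \<and> xs ! (i + 1) \<in> pa (xs ! i)"

definition active :: "('i \<Rightarrow> 'i set) \<Rightarrow> 'i set \<Rightarrow> 'i list \<Rightarrow> bool" where
  "active pa Z xs \<longleftrightarrow>
     (\<forall>i. 0 < i \<and> i + 1 < length xs \<longrightarrow>
        (collider pa xs i \<longrightarrow> (\<exists>w\<in>Z. (xs ! i, w) \<in> (edges pa)\<^sup>*)) \<and>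
        (\<not> collider pa xs i \<longrightarrow> xs ! i \<notin> Z))"

definition d_sep :: "('i \<Rightarrow> 'i set) \<Rightarrow> 'i \<Rightarrow> 'i \<Rightarrow> 'i set \<Rightarrow> bool" where
  "d_sep pa x y Z \<longleftrightarrow>
     \<not> (\<exists>xs. is_path pa xs \<and> hd xs = x \<and> last xs = y \<and> active pa Z xs)"

definition markov_equiv :: "'i set \<Rightarrow> ('i \<Rightarrow> 'i set) \<Rightarrow> ('i \<Rightarrow> 'i set) \<Rightarrow> bool" where
  "markov_equiv V G G' \<longleftrightarrow>
     (\<forall>x\<in>V. \<forall>y\<in>V. \<forall>Z. Z \<subseteq> V \<and> x \<noteq> y \<and> x \<notin> Z \<and> y \<notin> Z \<longrightarrow>
        (d_sep G x y Z \<longleftrightarrow> d_sep G' x y Z))"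

end

theory Submission
  imports Defs
begin

text \<open>Contract Xb into Xa. The resulting DAG G' on X1 gives Xa a child, so by (II) it lies
  outside the optimal class and by (I) it scores at most the optimum on X1 minus \<beta>. Replacing
  the parent Xb by Xa, or letting Xa take over the parents of Xb, raises a conditional entropy by
  at most \<lambda> (chain rule, and conditioning reduces entropy, i.e. submodularity of entropy,
  which follows from Gibbs' inequality); hence S(G) \<le> S(G') + |X1| \<lambda>. Conversely, adding
  the family Xb \<leftarrow> Xa to an optimal DAG on X1 shows that S* is at least the optimum on X1
  minus \<lambda>. Only (I), (II) and (V) are needed.\<close>

definition pmf_entropy :: "'a pmf \<Rightarrow> real" where
  "pmf_entropy q = (\<Sum>x\<in>set_pmf q. - pmf q x * ln (pmf q x))"

lemma sum_set_pmf_map: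
  assumes fin: "finite (set_pmf p)"
  shows "(\<Sum>w\<in>set_pmf p. pmf p w * \<phi> (f w))
       = (\<Sum>u\<in>set_pmf (map_pmf f p). pmf (map_pmf f p) u * \<phi> u)"
proof -
  have "(\<Sum>w\<in>set_pmf p. pmf p w * \<phi> (f w)) = (\<integral>w. \<phi> (f w) \<partial>measure_pmf p)"
    by (subst integral_measure_pmf_real[where A="set_pmf p"]) (auto simp: fin mult.commute)
  also have "\<dots> = (\<integral>u. \<phi> u \<partial>measure_pmf (map_pmf f p))" by simp
  also have "\<dots> = (\<Sum>u\<in>set_pmf (map_pmf f p). pmf (map_pmf f p) u * \<phi> u)"
    by (subst integral_measure_pmf_real[where A="set_pmf (map_pmf f p)"]) (auto simp: fin mult.commute)
  finally show ?thesis .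
qed

lemma pmf_entropy_map_eq_sum:
  assumes "finite (set_pmf p)"
  shows "pmf_entropy (map_pmf f p) = (\<Sum>w\<in>set_pmf p. pmf p w * - ln (pmf (map_pmf f p) (f w)))"
  unfolding pmf_entropy_def using sum_set_pmf_map[OF assms, of "\<lambda>u. - ln (pmf (map_pmf f p) u)" f]
  by simp

lemma pmf_entropy_map_le:
  assumes fin: "finite (set_pmf q)"
  shows "pmf_entropy (map_pmf g q) \<le> pmf_entropy q"
proof -
  have "(\<Sum>w\<in>set_pmf q. pmf q w * - ln (pmf (map_pmf g q) (g w)))
      \<le> (\<Sum>w\<in>set_pmf q. pmf q w * - ln (pmf q w))"
  proof (rule sum_mono)
    fix w assume w: "w \<in> set_pmf q"
    have "pmf q w = measure q {w}" by (simp add: measure_pmf_single)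
    also have "\<dots> \<le> measure q (g -` {g w})" by (rule measure_pmf.finite_measure_mono) auto
    also have "\<dots> = pmf (map_pmf g q) (g w)" by (simp add: pmf_map)
    finally have "pmf q w \<le> pmf (map_pmf g q) (g w)" .
    with w have "ln (pmf q w) \<le> ln (pmf (map_pmf g q) (g w))"
      by (simp add: pmf_positive)
    then show "pmf q w * - ln (pmf (map_pmf g q) (g w)) \<le> pmf q w * - ln (pmf q w)"
      by (intro mult_left_mono) auto
  qed
  then show ?thesis
    using pmf_entropy_map_eq_sum[OF fin, of g] by (simp add: pmf_entropy_def)
qed

lemma pmf_entropy_map_inj:
  assumes fin: "finite (set_pmf q)" and inj: "inj_on g (set_pmf q)"
  shows "pmf_entropy (map_pmf g q) = pmf_entropy q"
proof (rule antisym)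
  have "map_pmf (the_inv_into (set_pmf q) g) (map_pmf g q) = q"
    by (simp add: pmf.map_comp map_pmf_idI the_inv_into_f_f[OF inj])
  then show "pmf_entropy q \<le> pmf_entropy (map_pmf g q)"
    using pmf_entropy_map_le[of "map_pmf g q" "the_inv_into (set_pmf q) g"] fin by simp
qed (rule pmf_entropy_map_le[OF fin])

lemma gibbs_inequality:
  assumes fin: "finite (set_pmf q)" and pos: "\<And>x. x \<in> set_pmf q \<Longrightarrow> 0 < \<kappa> x"
    and mass: "(\<Sum>x\<in>set_pmf q. \<kappa> x) \<le> 1"
  shows "(\<Sum>x\<in>set_pmf q. pmf q x * ln (\<kappa> x / pmf q x)) \<le> 0"
proof -
  have "(\<Sum>x\<in>set_pmf q. pmf q x * ln (\<kappa> x / pmf q x))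
      \<le> (\<Sum>x\<in>set_pmf q. pmf q x * (\<kappa> x / pmf q x - 1))"
    by (intro sum_mono mult_left_mono ln_le_minus_one) (auto simp: pos pmf_positive)
  also have "\<dots> = (\<Sum>x\<in>set_pmf q. \<kappa> x) - (\<Sum>x\<in>set_pmf q. pmf q x)"
    by (auto simp: algebra_simps sum_subtractf set_pmf_eq intro!: sum.cong)
  also have "(\<Sum>x\<in>set_pmf q. pmf q x) = 1"
    by (rule sum_pmf_eq_1) (auto simp: fin)
  finally show ?thesis using mass by simp
qed

lemma pmf_map_fst_eq_sum:
  assumes fin: "finite (set_pmf P)"
  shows "pmf (map_pmf fst P) y = (\<Sum>z\<in>{z. (y, z) \<in> set_pmf P}. pmf P (y, z))"
proof -
  have "pmf (map_pmf fst P) y = measure P (fst -` {y} \<inter> set_pmf P)"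
    by (simp add: pmf_map measure_Int_set_pmf)
  also have "\<dots> = (\<Sum>w\<in>fst -` {y} \<inter> set_pmf P. pmf P w)"
    using fin by (simp add: measure_measure_pmf_finite)
  also have "fst -` {y} \<inter> set_pmf P = Pair y ` {z. (y, z) \<in> set_pmf P}" by force
  also have "(\<Sum>w\<in>\<dots>. pmf P w) = (\<Sum>z\<in>{z. (y, z) \<in> set_pmf P}. pmf P (y, z))"
    by (subst sum.reindex) (auto simp: inj_on_def)
  finally show ?thesis .
qed

text \<open>The weights below are those of the distribution that makes x and z conditionally
  independent given y while keeping the marginals of (x, y) and (y, z).\<close>

lemma sum_chain_weights_le_1:
  fixes P :: "('a \<times> 'b \<times> 'c) pmf"
  assumes fin: "finite (set_pmf P)"
  defines "Pxy \<equiv> map_pmf (\<lambda>(x, y, z). (x, y)) P" and "Pyz \<equiv> map_pmf snd P"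
    and "Py \<equiv> map_pmf (\<lambda>(x, y, z). y) P"
  shows "(\<Sum>(x, y, z)\<in>set_pmf P. pmf Pxy (x, y) * pmf Pyz (y, z) / pmf Py y) \<le> 1"
proof -
  define \<kappa> where "\<kappa> = (\<lambda>(x, y, z). pmf Pxy (x, y) * pmf Pyz (y, z) / pmf Py y)"
  define S where "S = (SIGMA u:set_pmf Pxy. {z. (snd u, z) \<in> set_pmf Pyz})"
  have fin_Pxy: "finite (set_pmf Pxy)" and fin_Pyz: "finite (set_pmf Pyz)"
    using fin by (simp_all add: Pxy_def Pyz_def)
  have fin_fibre: "finite {z. (y, z) \<in> set_pmf Pyz}" for y
    by (rule finite_subset[of _ "snd ` set_pmf Pyz"]) (force simp: fin_Pyz)+
  have fin_S: "finite S"
    unfolding S_def using fin_Pxy fin_fibre by blast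
  have "(\<Sum>t\<in>set_pmf P. \<kappa> t) \<le> (\<Sum>t\<in>(\<lambda>((x, y), z). (x, y, z)) ` S. \<kappa> t)"
  proof (rule sum_mono2)
    show "set_pmf P \<subseteq> (\<lambda>((x, y), z). (x, y, z)) ` S"
    proof
      fix t assume "t \<in> set_pmf P"
      moreover obtain x y z where "t = (x, y, z)" by (cases t) auto
      ultimately have "((x, y), z) \<in> S"
        by (force simp: S_def Pxy_def Pyz_def)
      then show "t \<in> (\<lambda>((x, y), z). (x, y, z)) ` S"
        using \<open>t = (x, y, z)\<close> by force
    qed
  qed (auto simp: fin_S \<kappa>_def)
  also have "\<dots> = (\<Sum>u\<in>set_pmf Pxy. \<Sum>z\<in>{z. (snd u, z) \<in> set_pmf Pyz}. \<kappa> (fst u, snd u, z))"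
    by (subst sum.reindex) (auto simp: inj_on_def S_def sum.Sigma fin_Pxy fin_fibre split_beta)
  also have "\<dots> = (\<Sum>u\<in>set_pmf Pxy. pmf Pxy u)"
  proof (rule sum.cong[OF refl])
    fix u assume u: "u \<in> set_pmf Pxy"
    have "Py = map_pmf fst Pyz"
      by (simp add: Py_def Pyz_def pmf.map_comp o_def case_prod_unfold)
    then have fibre: "(\<Sum>z\<in>{z. (snd u, z) \<in> set_pmf Pyz}. pmf Pyz (snd u, z)) = pmf Py (snd u)"
      by (simp add: pmf_map_fst_eq_sum fin_Pyz)
    have "0 < pmf Py (snd u)"
      using u by (force simp: Py_def Pxy_def pmf_positive_iff)
    then show "(\<Sum>z\<in>{z. (snd u, z) \<in> set_pmf Pyz}. \<kappa> (fst u, snd u, z)) = pmf Pxy u"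
      by (simp add: \<kappa>_def sum_distrib_left[symmetric] sum_divide_distrib[symmetric] fibre)
  qed
  also have "\<dots> = 1" by (rule sum_pmf_eq_1) (auto simp: fin_Pxy)
  finally show ?thesis by (simp add: \<kappa>_def)
qed

lemma pmf_entropy_submodular:
  fixes P :: "('a \<times> 'b \<times> 'c) pmf"
  assumes fin: "finite (set_pmf P)"
  shows "pmf_entropy P + pmf_entropy (map_pmf (\<lambda>(x, y, z). y) P)
       \<le> pmf_entropy (map_pmf (\<lambda>(x, y, z). (x, y)) P) + pmf_entropy (map_pmf snd P)"
proof -
  define Pxy where "Pxy = map_pmf (\<lambda>(x, y, z). (x, y)) P"
  define Pyz where "Pyz = map_pmf snd P"
  define Py where "Py = map_pmf (\<lambda>(x, y, z). y) P"
  define \<kappa> where "\<kappa> = (\<lambda>(x, y, z). pmf Pxy (x, y) * pmf Pyz (y, z) / pmf Py y)"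
  have pos: "0 < pmf P t" "0 < pmf Pxy (fst t, fst (snd t))" "0 < pmf Pyz (snd t)"
    "0 < pmf Py (fst (snd t))" if "t \<in> set_pmf P" for t
    using that by (auto simp: Pxy_def Pyz_def Py_def pmf_positive split_beta)
  have entropy_P: "pmf_entropy P = (\<Sum>t\<in>set_pmf P. pmf P t * - ln (pmf P t))"
    by (simp add: pmf_entropy_def)
  have entropies:
    "pmf_entropy Pxy = (\<Sum>t\<in>set_pmf P. pmf P t * - ln (pmf Pxy (fst t, fst (snd t))))"
    "pmf_entropy Pyz = (\<Sum>t\<in>set_pmf P. pmf P t * - ln (pmf Pyz (snd t)))"
    "pmf_entropy Py = (\<Sum>t\<in>set_pmf P. pmf P t * - ln (pmf Py (fst (snd t))))"
    unfolding Pxy_def Pyz_def Py_def pmf_entropy_map_eq_sum[OF fin] by (simp_all add: split_beta)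
  have ln_\<kappa>: "ln (\<kappa> t / pmf P t) = ln (pmf Pxy (fst t, fst (snd t))) + ln (pmf Pyz (snd t))
      - ln (pmf Py (fst (snd t))) - ln (pmf P t)" if "t \<in> set_pmf P" for t
    using pos[OF that] by (simp add: \<kappa>_def split_beta ln_div ln_mult)
  have "pmf_entropy P + pmf_entropy Py - pmf_entropy Pxy - pmf_entropy Pyz
      = (\<Sum>t\<in>set_pmf P. pmf P t * ln (\<kappa> t / pmf P t))"
    unfolding entropy_P entropies sum_subtractf[symmetric] sum.distrib[symmetric]
    by (rule sum.cong) (simp_all add: ln_\<kappa> algebra_simps)
  also have "\<dots> \<le> 0"
  proof (rule gibbs_inequality[OF fin])
    show "0 < \<kappa> t" if "t \<in> set_pmf P" for t
      using pos[OF that] by (simp add: \<kappa>_def split_beta)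
    show "(\<Sum>t\<in>set_pmf P. \<kappa> t) \<le> 1"
      using sum_chain_weights_le_1[OF fin] by (simp add: \<kappa>_def Pxy_def Pyz_def Py_def)
  qed
  finally show ?thesis by (simp add: Pxy_def Pyz_def Py_def)
qed

lemma ent_eq_pmf_entropy: "ent p S = pmf_entropy (marg S p)"
  by (simp add: ent_def pmf_entropy_def)

lemma marg_marg: "S \<subseteq> V \<Longrightarrow> marg S (marg V p) = marg S p"
  by (simp add: marg_def pmf.map_comp o_def Int_absorb1)

lemma finite_set_pmf_marg_subset:
  "finite (set_pmf (marg V p)) \<Longrightarrow> S \<subseteq> V \<Longrightarrow> finite (set_pmf (marg S p))"
  by (metis marg_marg marg_def finite_imageI pmf.set_map)

lemma ent_marg: "S \<subseteq> V \<Longrightarrow> ent (marg V p) S = ent p S"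
  by (simp add: ent_def marg_marg)

lemma condH_marg: "insert v S \<subseteq> V \<Longrightarrow> condH (marg V p) v S = condH p v S"
  by (simp add: condH_def ent_marg)

lemma ent_mono:
  assumes fin: "finite (set_pmf (marg V p))" and "S \<subseteq> T" "T \<subseteq> V"
  shows "ent p S \<le> ent p T"
proof -
  have "ent p S = pmf_entropy (map_pmf (\<lambda>a. restrict a S) (marg T p))"
    using marg_marg[OF \<open>S \<subseteq> T\<close>, of p] by (simp add: ent_eq_pmf_entropy marg_def)
  also have "\<dots> \<le> pmf_entropy (marg T p)"
    using assms by (intro pmf_entropy_map_le finite_set_pmf_marg_subset[OF fin])
  finally show ?thesis by (simp add: ent_eq_pmf_entropy)
qed

lemma ent_eq_pmf_entropy_map_inj:
  assumes fin: "finite (set_pmf (marg S p))" and inj: "inj_on f (extensional S)"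
    and g: "\<And>w. g w = f (restrict w S)"
  shows "ent p S = pmf_entropy (map_pmf g p)"
proof -
  have "inj_on f (set_pmf (marg S p))"
    by (rule inj_on_subset[OF inj]) (auto simp: marg_def)
  then have "pmf_entropy (map_pmf f (marg S p)) = ent p S"
    using fin by (simp add: pmf_entropy_map_inj ent_eq_pmf_entropy)
  moreover have "map_pmf f (marg S p) = map_pmf g p"
    unfolding marg_def pmf.map_comp by (rule map_pmf_cong) (simp_all add: g)
  ultimately show ?thesis by simp
qed

lemma inj_on_restrict_pair: "inj_on (\<lambda>r. (restrict r A, restrict r B)) (extensional (A \<union> B))"
proof (rule inj_onI)
  fix r s assume "r \<in> extensional (A \<union> B)" "s \<in> extensional (A \<union> B)"
    and "(restrict r A, restrict r B) = (restrict s A, restrict s B)"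
  then show "r = s"
    by (intro extensionalityI[of r "A \<union> B"])
      (auto dest!: fun_cong simp: restrict_def split: if_splits)
qed

lemma inj_on_restrict_triple:
  "inj_on (\<lambda>r. (restrict r A, restrict r B, restrict r C)) (extensional (A \<union> B \<union> C))"
proof (rule inj_onI)
  fix r s assume "r \<in> extensional (A \<union> B \<union> C)" "s \<in> extensional (A \<union> B \<union> C)"
    and "(restrict r A, restrict r B, restrict r C) = (restrict s A, restrict s B, restrict s C)"
  then show "r = s"
    by (intro extensionalityI[of r "A \<union> B \<union> C"])
      (auto dest!: fun_cong simp: restrict_def split: if_splits)
qed

lemma ent_submodular:
  assumes fin: "finite (set_pmf (marg V p))" and V: "A \<union> B \<union> C \<subseteq> V"
  shows "ent p (A \<union> B \<union> C) + ent p C \<le> ent p (A \<union> C) + ent p (B \<union> C)"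
proof -
  define P where "P = map_pmf (\<lambda>w. (restrict w A, restrict w C, restrict w B)) p"
  have fin_S: "finite (set_pmf (marg S p))" if "S \<subseteq> V" for S
    using finite_set_pmf_marg_subset[OF fin that] .
  have "P = map_pmf (\<lambda>r. (restrict r A, restrict r C, restrict r B)) (marg V p)"
    using V by (simp add: P_def marg_def pmf.map_comp o_def Int_absorb1)
  then have fin_P: "finite (set_pmf P)"
    using fin by simp
  have "ent p (A \<union> C \<union> B) = pmf_entropy P"
    unfolding P_def using V
    by (intro ent_eq_pmf_entropy_map_inj[OF fin_S inj_on_restrict_triple]) (auto simp: fun_eq_iff)
  moreover have "ent p (A \<union> C) = pmf_entropy (map_pmf (\<lambda>(x, y, z). (x, y)) P)"
    unfolding P_def pmf.map_comp using V
    by (intro ent_eq_pmf_entropy_map_inj[OF fin_S inj_on_restrict_pair]) (auto simp: fun_eq_iff)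
  moreover have "ent p (C \<union> B) = pmf_entropy (map_pmf snd P)"
    unfolding P_def pmf.map_comp using V
    by (intro ent_eq_pmf_entropy_map_inj[OF fin_S inj_on_restrict_pair]) (auto simp: fun_eq_iff)
  moreover have "ent p C = pmf_entropy (map_pmf (\<lambda>(x, y, z). y) P)"
    unfolding P_def pmf.map_comp using V
    by (intro ent_eq_pmf_entropy_map_inj[OF fin_S, of C "\<lambda>r. r"]) auto
  ultimately show ?thesis
    using pmf_entropy_submodular[OF fin_P] by (simp add: Un_ac)
qed

lemma condH_nonneg:
  "finite (set_pmf (marg V p)) \<Longrightarrow> insert v S \<subseteq> V \<Longrightarrow> 0 \<le> condH p v S"
  using ent_mono[of V p S "insert v S"] by (auto simp: condH_def)

lemma condH_Un_le:
  assumes fin: "finite (set_pmf (marg V p))" and V: "insert v (S \<union> T) \<subseteq> V"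
  shows "condH p v (S \<union> T) \<le> condH p v S"
proof -
  have "ent p ({v} \<union> T \<union> S) + ent p S \<le> ent p ({v} \<union> S) + ent p (T \<union> S)"
    using V by (intro ent_submodular[OF fin]) auto
  then show ?thesis
    by (simp add: condH_def Un_commute)
qed

lemma condH_le_condH_insert_add:
  "finite (set_pmf (marg V p)) \<Longrightarrow> insert v (insert u S) \<subseteq> V
    \<Longrightarrow> condH p v S \<le> condH p v (insert u S) + condH p u S"
  using ent_mono[of V p "insert v S" "insert v (insert u S)"]
  by (auto simp: condH_def insert_commute)

lemma condH_triangle:
  "finite (set_pmf (marg V p)) \<Longrightarrow> insert a (insert b P) \<subseteq> V
    \<Longrightarrow> condH p a P \<le> condH p b P + condH p a {b}"
  using condH_le_condH_insert_add[of V p a b P] condH_Un_le[of V p a "{b}" P] by auto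

definition replace_parent :: "'i \<Rightarrow> 'i \<Rightarrow> 'i set \<Rightarrow> 'i set" where
  "replace_parent b a P = (if b \<in> P then insert a (P - {b}) else P)"

lemma card_replace_parent_le: "card (replace_parent b a P) \<le> card P"
proof (cases "b \<in> P \<and> finite P")
  case True
  then have "card (insert a (P - {b})) \<le> Suc (card (P - {b}))"
    by (simp add: card_insert_le_m1)
  also have "\<dots> = card P"
    using True by (intro card_Suc_Diff1) auto
  finally show ?thesis
    using True by (simp add: replace_parent_def)
qed (auto simp: replace_parent_def)

lemma condH_replace_parent_le:
  assumes fin: "finite (set_pmf (marg V p))" and V: "insert a (insert b (insert v P)) \<subseteq> V"
  shows "condH p v (replace_parent b a P) \<le> condH p v P + condH p b {a}"
proof (cases "b \<in> P")
  case True
  define Q where "Q = insert a (P - {b})"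
  have "condH p v Q \<le> condH p v (insert b Q) + condH p b Q"
    using V by (intro condH_le_condH_insert_add[OF fin]) (auto simp: Q_def)
  moreover have "condH p v (P \<union> {a}) \<le> condH p v P"
    using V by (intro condH_Un_le[OF fin]) auto
  moreover have "condH p b ({a} \<union> (P - {b})) \<le> condH p b {a}"
    using V by (intro condH_Un_le[OF fin]) auto
  moreover have "insert b Q = P \<union> {a}" and "Q = {a} \<union> (P - {b})"
    using True by (auto simp: Q_def)
  ultimately show ?thesis
    using True by (simp add: replace_parent_def Q_def)
next
  case False
  then show ?thesis
    using condH_nonneg[OF fin, of b "{a}"] V by (simp add: replace_parent_def)
qed

lemma edges_iff [simp]: "(u, w) \<in> edges pa \<longleftrightarrow> u \<in> pa w"
  by (simp add: edges_def)

lemma not_parent_if_trancl: "acyclic (edges G) \<Longrightarrow> (b, a) \<in> (edges G)\<^sup>+ \<Longrightarrow> a \<notin> G b"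
  unfolding acyclic_def by (meson edges_iff trancl_into_trancl)

lemma acyclic_Un_edges_from:
  assumes acyc: "acyclic E" and no_path: "(b, a) \<notin> E\<^sup>*"
  shows "acyclic (E \<union> {a} \<times> E `` {b})"
proof -
  define R where "R = E\<^sup>+ \<union> {(u, w). (u, a) \<in> E\<^sup>* \<and> (b, w) \<in> E\<^sup>+}"
  have "trans R"
    unfolding trans_def R_def using no_path
    by (auto intro: trancl_trans rtrancl_trans trancl_into_rtrancl)
  moreover have "(x, x) \<notin> R" for x
    using acyc no_path unfolding R_def acyclic_def
    by (auto intro: trancl_into_rtrancl rtrancl_trans)
  ultimately have "acyclic R"
    by (simp add: acyclic_def trancl_id)
  moreover have "E \<union> {a} \<times> E `` {b} \<subseteq> R"
    by (auto simp: R_def)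
  ultimately show ?thesis
    by (rule acyclic_subset)
qed

lemma acyclic_inv_image_trancl: "acyclic E \<Longrightarrow> acyclic (inv_image (E\<^sup>+) f)"
  by (simp add: acyclic_def trancl_id trans_inv_image)

text \<open>Contraction of b into a: the merged vertex a receives the children of both, and the
  parents of whichever of a, b lies upstream, so that no cycle is created.\<close>

definition merge_vertex :: "'i \<Rightarrow> 'i \<Rightarrow> ('i \<Rightarrow> 'i set) \<Rightarrow> 'i \<Rightarrow> 'i set" where
  "merge_vertex a b G v =
     (if v = b then {}
      else if v = a \<and> (b, a) \<in> (edges G)\<^sup>+ then G b
      else replace_parent b a (G v))"

lemma acyclic_merge_vertex:
  assumes acyc: "acyclic (edges G)" and "a \<noteq> b"
  shows "acyclic (edges (merge_vertex a b G))"
proof (cases "(b, a) \<in> (edges G)\<^sup>+")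
  case False
  then have "b \<notin> G a" by auto
  then have "edges (merge_vertex a b G) \<subseteq> edges G \<union> {a} \<times> edges G `` {b}"
    using False by (auto simp: merge_vertex_def replace_parent_def split: if_splits)
  moreover have "(b, a) \<notin> (edges G)\<^sup>*"
    using False \<open>a \<noteq> b\<close> by (simp add: rtrancl_eq_or_trancl)
  ultimately show ?thesis
    using acyclic_Un_edges_from[OF acyc] acyclic_subset by blast
next
  case True
  have "a \<notin> G b"
    using acyc True by (rule not_parent_if_trancl)
  have step: "u \<in> G w \<Longrightarrow> (u, w) \<in> (edges G)\<^sup>+" for u w
    by (simp add: r_into_trancl')
  have "(b, w) \<in> (edges G)\<^sup>+" if "a \<in> G w" for w
    using True that by (simp add: trancl_into_trancl)
  then have "edges (merge_vertex a b G) \<subseteq> inv_image ((edges G)\<^sup>+) (id(a := b))"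
    using True \<open>a \<notin> G b\<close> \<open>a \<noteq> b\<close>
    by (auto simp: merge_vertex_def replace_parent_def step split: if_splits)
  then show ?thesis
    using acyclic_inv_image_trancl[OF acyc] acyclic_subset by blast
qed

lemma dag_k_merge_vertex:
  assumes G: "dag_k (insert b X) k G" and "b \<notin> X" and "a \<in> X"
  shows "dag_k X k (merge_vertex a b G)"
proof -
  have par: "G v \<subseteq> insert b X - {v}" "card (G v) \<le> k" if "v \<in> insert b X" for v
    using G that by (auto simp: dag_k_def)
  have out: "G v = {}" if "v \<notin> insert b X" for v
    using G that by (auto simp: dag_k_def)
  have acyc: "acyclic (edges G)"
    using G by (simp add: dag_k_def)
  have "b \<notin> G a" if "(b, a) \<notin> (edges G)\<^sup>+"
    using that by auto
  moreover have "a \<notin> G b" if "(b, a) \<in> (edges G)\<^sup>+"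
    using acyc that by (rule not_parent_if_trancl)
  ultimately have "merge_vertex a b G v \<subseteq> X - {v}" if "v \<in> X" for v
    using that par[of v] par[of b] \<open>b \<notin> X\<close> \<open>a \<in> X\<close>
    by (auto simp: merge_vertex_def replace_parent_def)
  moreover have "card (merge_vertex a b G v) \<le> k" if "v \<in> X" for v
    using that par[of b] par[of v] card_replace_parent_le[of b a "G v"]
    by (auto simp: merge_vertex_def)
  moreover have "merge_vertex a b G v = {}" if "v \<notin> X" for v
    using that out[of v] \<open>a \<in> X\<close> by (auto simp: merge_vertex_def replace_parent_def)
  moreover have "acyclic (edges (merge_vertex a b G))"
    using \<open>b \<notin> X\<close> \<open>a \<in> X\<close> by (intro acyclic_merge_vertex[OF acyc]) auto
  ultimately show ?thesis
    by (simp add: dag_k_def)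
qed

lemma in_merge_vertex:
  "v \<noteq> a \<Longrightarrow> v \<noteq> b \<Longrightarrow> a \<in> G v \<or> b \<in> G v \<Longrightarrow> a \<in> merge_vertex a b G v"
  by (auto simp: merge_vertex_def replace_parent_def)

lemma score_le_score_merge_vertex:
  assumes fin: "finite (set_pmf (marg (insert b X) p))" and "finite X"
    and "b \<notin> X" and "a \<in> X" and G: "dag_k (insert b X) k G"
    and ba: "condH p b {a} \<le> lam" and ab: "condH p a {b} \<le> lam"
  shows "score p (insert b X) G \<le> score p X (merge_vertex a b G) + real (card X) * lam"
proof -
  define V where "V = insert b X"
  define F where "F v = condH p v (G v)" for v
  define up where "up \<longleftrightarrow> (b, a) \<in> (edges G)\<^sup>+"
  \<comment> \<open>the family of \<sigma> v in G pays for the new family of v\<close>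
  define \<sigma> where "\<sigma> v = (if v = a \<and> up then b else v)" for v
  have fin_V: "finite (set_pmf (marg V p))"
    using fin by (simp add: V_def)
  have family: "insert v (G v) \<subseteq> V" if "v \<in> V" for v
    using G that by (auto simp: dag_k_def V_def)
  have "a \<in> V" "b \<in> V"
    using \<open>a \<in> X\<close> by (auto simp: V_def)
  have family_le: "condH p v (merge_vertex a b G v) \<le> F (\<sigma> v) + lam" if "v \<in> X" for v
  proof (cases "v = a \<and> up")
    case True
    then have "condH p v (merge_vertex a b G v) = condH p a (G b)"
      using \<open>b \<notin> X\<close> \<open>a \<in> X\<close> by (auto simp: merge_vertex_def up_def)
    also have "\<dots> \<le> condH p b (G b) + condH p a {b}"
      using family[of b] \<open>a \<in> V\<close> \<open>b \<in> V\<close> by (intro condH_triangle[OF fin_V]) auto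
    moreover have "\<sigma> v = b"
      unfolding \<sigma>_def by (rule if_P[OF True])
    ultimately show ?thesis
      using ab by (simp add: F_def)
  next
    case False
    then have "condH p v (merge_vertex a b G v) = condH p v (replace_parent b a (G v))"
      using that \<open>b \<notin> X\<close> by (auto simp: merge_vertex_def up_def)
    also have "\<dots> \<le> condH p v (G v) + condH p b {a}"
      using family[of v] that \<open>a \<in> V\<close> \<open>b \<in> V\<close>
      by (intro condH_replace_parent_le[OF fin_V]) (auto simp: V_def)
    moreover have "\<sigma> v = v"
      unfolding \<sigma>_def by (rule if_not_P[OF False])
    ultimately show ?thesis
      using ba by (simp add: F_def)
  qed
  have F_nonneg: "0 \<le> F v" if "v \<in> V" for v
    unfolding F_def using family[OF that] by (rule condH_nonneg[OF fin_V])
  have "inj_on \<sigma> X"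
  proof (rule inj_onI)
    fix x y assume "x \<in> X" "y \<in> X" "\<sigma> x = \<sigma> y"
    then show "x = y"
      using \<open>b \<notin> X\<close> unfolding \<sigma>_def by (auto split: if_splits)
  qed
  then have "(\<Sum>v\<in>X. F (\<sigma> v)) = sum F (\<sigma> ` X)"
    by (simp add: sum.reindex)
  also have "\<dots> \<le> sum F V"
    by (rule sum_mono2) (auto simp: V_def \<sigma>_def \<open>finite X\<close> F_nonneg)
  finally have "(\<Sum>v\<in>X. F (\<sigma> v)) \<le> sum F V" .
  moreover have "(\<Sum>v\<in>X. condH p v (merge_vertex a b G v))
      \<le> (\<Sum>v\<in>X. F (\<sigma> v)) + real (card X) * lam"
    using sum_mono[OF family_le] by (simp add: sum.distrib)
  moreover have "score p (insert b X) G = - sum F V"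
    by (simp add: score_def V_def F_def)
  ultimately show ?thesis
    by (simp add: score_def)
qed

lemma score_marg:
  assumes "dag_k V k G" shows "score (marg V p) V G = score p V G"
proof -
  have "condH (marg V p) v (G v) = condH p v (G v)" if "v \<in> V" for v
    using assms that by (intro condH_marg) (auto simp: dag_k_def)
  then show ?thesis
    by (simp add: score_def)
qed

lemma finite_dag_k: assumes "finite V" shows "finite {G. dag_k V k G}"
proof -
  have "inj_on (\<lambda>G. restrict G V) {G. dag_k V k G}"
  proof (rule inj_onI)
    fix G G' assume "G \<in> {G. dag_k V k G}" "G' \<in> {G. dag_k V k G}"
      and eq: "restrict G V = restrict G' V"
    show "G = G'"
    proof
      fix v show "G v = G' v"
        using fun_cong[OF eq, of v] \<open>G \<in> _\<close> \<open>G' \<in> _\<close> by (cases "v \<in> V") (auto simp: dag_k_def)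
    qed
  qed
  moreover have "(\<lambda>G. restrict G V) ` {G. dag_k V k G} \<subseteq> (\<Pi>\<^sub>E v\<in>V. Pow V)"
    by (auto simp: dag_k_def PiE_iff) blast
  then have "finite ((\<lambda>G. restrict G V) ` {G. dag_k V k G})"
    by (rule finite_subset) (simp add: finite_PiE assms)
  ultimately show ?thesis
    by (rule finite_imageD[rotated])
qed

lemma dag_k_empty: "dag_k V k (\<lambda>_. {})"
  by (simp add: dag_k_def acyclic_def edges_def)

lemma score_le_opt_score: "finite V \<Longrightarrow> dag_k V k G \<Longrightarrow> score p V G \<le> opt_score p V k"
  unfolding opt_score_def by (rule Max_ge) (auto intro: finite_dag_k)

lemma optimal_exists:
  assumes "finite V" shows "\<exists>G. optimal p V k G"
proof -
  have "opt_score p V k \<in> score p V ` {G. dag_k V k G}"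
    unfolding opt_score_def using assms dag_k_empty by (intro Max_in) (auto intro: finite_dag_k)
  then show ?thesis
    unfolding optimal_def by auto
qed

lemma opt_score_marg_le_opt_score_insert:
  assumes "finite X" and "b \<notin> X" and "a \<in> X" and "0 < k"
  shows "opt_score (marg X p) X k - condH p b {a} \<le> opt_score p (insert b X) k"
proof -
  obtain G1 where G1: "optimal (marg X p) X k G1"
    using optimal_exists[OF \<open>finite X\<close>] by blast
  then have dag: "dag_k X k G1"
    by (simp add: optimal_def)
  then have no_child_b: "b \<notin> G1 w" for w
    using \<open>b \<notin> X\<close> by (cases "w \<in> X") (auto simp: dag_k_def)
  define G where "G = G1(b := {a})"
  have "(b, a) \<notin> (edges G1)\<^sup>*"
    using no_child_b \<open>a \<in> X\<close> \<open>b \<notin> X\<close> by (auto elim: converse_rtranclE)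
  moreover have "edges G = insert (a, b) (edges G1)"
    using dag \<open>b \<notin> X\<close> by (auto simp: G_def edges_def dag_k_def)
  ultimately have "dag_k (insert b X) k G"
    using dag \<open>b \<notin> X\<close> \<open>a \<in> X\<close> \<open>0 < k\<close> by (auto simp: dag_k_def G_def)
  then have "score p (insert b X) G \<le> opt_score p (insert b X) k"
    using \<open>finite X\<close> by (simp add: score_le_opt_score)
  moreover have "score p (insert b X) G = score p X G1 - condH p b {a}"
    using \<open>finite X\<close> \<open>b \<notin> X\<close> by (auto simp: score_def G_def intro!: sum.cong)
  moreover have "score p X G1 = opt_score (marg X p) X k"
    using G1 score_marg[OF dag, of p] by (simp add: optimal_def)
  ultimately show ?thesis
    by simp
qed

theorem lemma9:
  fixes k :: nat and X1 :: "'i set" and Xa Xb :: 'i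
    and D1 D2 :: "('i \<Rightarrow> 'v) pmf" and q :: "(bool \<times> ('i \<Rightarrow> 'v)) pmf"
    and \<alpha> \<beta> lam :: real and G :: "'i \<Rightarrow> 'i set"
  assumes k_pos: "0 < k"
    and X1_fin: "finite X1" and X1_card: "k \<le> card X1"
    and Xa_in: "Xa \<in> X1" and Xb_notin: "Xb \<notin> X1"
    and fin_vals: "finite (set_pmf (marg (insert Xb X1) D2))"
    and D1_marg: "D1 = marg X1 D2"
    and \<alpha>_pos: "0 < \<alpha>" and \<beta>_pos: "0 < \<beta>"
    and I_unique: "\<And>G1 G2. optimal D1 X1 k G1 \<Longrightarrow> optimal D1 X1 k G2 \<Longrightarrow> markov_equiv X1 G1 G2"
    and I_gap: "\<And>G'. dag_k X1 k G' \<Longrightarrow> \<not> (\<exists>G1. optimal D1 X1 k G1 \<and> markov_equiv X1 G' G1)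
                 \<Longrightarrow> score D1 X1 G' \<le> opt_score D1 X1 k - \<beta>"
    and II: "\<And>G' v. dag_k X1 k G' \<Longrightarrow> (\<exists>G1. optimal D1 X1 k G1 \<and> markov_equiv X1 G' G1)
                 \<Longrightarrow> v \<in> X1 \<Longrightarrow> Xa \<notin> G' v"
    and III: "condH D1 Xa (X1 - {Xa}) = \<alpha>"
    and lam_pos: "0 < lam" and lam_bound: "lam < min \<alpha> (\<beta> / (3 * real (card (insert Xb X1))))"
    and D2_def: "D2 = map_pmf snd q"
    and C_indep: "map_pmf (\<lambda>(c, a). (c, restrict a X1)) q =
                  pair_pmf (map_pmf fst q) (map_pmf (\<lambda>(c, a). restrict a X1) q)"
    and C1: "\<And>c a. (c, a) \<in> set_pmf q \<Longrightarrow> c \<Longrightarrow> a Xb = a Xa"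
    and C0: "(\<exists>x\<in>set_pmf q. \<not> fst x) \<Longrightarrow>
              (let q0 = cond_pmf q {x. \<not> fst x} in
                 map_pmf (\<lambda>(c, a). (a Xb, restrict a X1)) q0 =
                 pair_pmf (map_pmf (\<lambda>(c, a). a Xb) q0) (map_pmf (\<lambda>(c, a). restrict a X1) q0))"
    and V: "max (condH D2 Xb {Xa}) (condH D2 Xa {Xb}) = lam"
    and G_dag: "dag_k (insert Xb X1) k G"
    and G_children: "\<exists>v\<in>insert Xb X1 - {Xa, Xb}. Xa \<in> G v \<or> Xb \<in> G v"
  shows "score D2 (insert Xb X1) G
           < opt_score D2 (insert Xb X1) k - \<beta> + 3 * real (card (insert Xb X1)) * lam"
proof -
  have lam_ba: "condH D2 Xb {Xa} \<le> lam" and lam_ab: "condH D2 Xa {Xb} \<le> lam"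
    using V by auto
  obtain v where "v \<in> X1" "v \<noteq> Xa" and "Xa \<in> G v \<or> Xb \<in> G v"
    using G_children by blast
  define G' where "G' = merge_vertex Xa Xb G"
  have dag: "dag_k X1 k G'"
    unfolding G'_def using G_dag Xb_notin Xa_in by (rule dag_k_merge_vertex)
  have "Xa \<in> G' v"
    unfolding G'_def using \<open>v \<in> X1\<close> \<open>v \<noteq> Xa\<close> \<open>Xa \<in> G v \<or> Xb \<in> G v\<close> Xb_notin
    by (intro in_merge_vertex) auto
  then have "\<not> (\<exists>G1. optimal D1 X1 k G1 \<and> markov_equiv X1 G' G1)"
    using II[OF dag _ \<open>v \<in> X1\<close>] by blast
  then have gap: "score D1 X1 G' \<le> opt_score D1 X1 k - \<beta>"
    by (rule I_gap[OF dag])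
  have "score D2 (insert Xb X1) G \<le> score D2 X1 G' + real (card X1) * lam"
    unfolding G'_def using fin_vals X1_fin Xb_notin Xa_in G_dag lam_ba lam_ab
    by (rule score_le_score_merge_vertex)
  moreover have "score D2 X1 G' = score D1 X1 G'"
    using score_marg[OF dag, of D2] D1_marg by simp
  moreover have "opt_score D1 X1 k - lam \<le> opt_score D2 (insert Xb X1) k"
    using opt_score_marg_le_opt_score_insert[OF X1_fin Xb_notin Xa_in k_pos, of D2] lam_ba
      D1_marg by simp
  moreover have "3 * real (card (insert Xb X1)) * lam = 3 * (real (card X1) * lam) + 3 * lam"
    using X1_fin Xb_notin by (simp add: algebra_simps)
  moreover have "0 \<le> real (card X1) * lam"
    using lam_pos by simp
  ultimately show ?thesis
    using gap lam_pos by linarith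
qed

end
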